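(* Let $\phi\in(0,1)$ and $\gamma_1\in[1,2)$ with $\gamma_1\phi\ne1$. For $\gamma_2\in\mathbb{R}$ let $z_1(\gamma_2),z_2(\gamma_2)$ be the two roots of $z^2-(2-\gamma_1-\gamma_2+\gamma_1\gamma_2\phi)z+(\gamma_1-1)(\gamma_2-1)=0$, let $\Delta(\gamma_2):=(2-\gamma_1-\gamma_2+\gamma_1\gamma_2\phi)^2-4(\gamma_1-1)(\gamma_2-1)$, let $\xi_1,\xi_2$ be the roots of $\Delta(\gamma_2)=0$ with $|\xi_1|\le|\xi_2|$, and $f(\gamma_2):=\max\{|z_1(\gamma_2)|,|z_2(\gamma_2)|\}$. Then $1\le\xi_1$, and: (a) if $\gamma_1\in[1,\frac{2}{1+\sqrt{1-\phi}}]$, then $f$ is non-increasing on $[1,\gamma_1]$; (b) if $\gamma_1\in[\frac{2}{1+\sqrt{1-\phi}},2)$, then $\xi_1\le\gamma_1$, $f$ is non-increasing on $[1,\xi_1]$, and $f(\gamma_2)=\sqrt{(\gamma_1-1)(\gamma_2-1)}$ for all $\gamma_2\in[\xi_1,\gamma_1]$. *)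

theory Defs
  imports Complex_Main
begin

definition qb :: "real \<Rightarrow> real \<Rightarrow> real \<Rightarrow> real" where
  "qb \<phi> g1 g2 = 2 - g1 - g2 + g1 * g2 * \<phi>"

definition qc :: "real \<Rightarrow> real \<Rightarrow> real" where
  "qc g1 g2 = (g1 - 1) * (g2 - 1)"

definition zroots :: "real \<Rightarrow> real \<Rightarrow> real \<Rightarrow> complex set" where
  "zroots \<phi> g1 g2 = {z::complex. z^2 - of_real (qb \<phi> g1 g2) * z + of_real (qc g1 g2) = 0}"

definition fmod :: "real \<Rightarrow> real \<Rightarrow> real \<Rightarrow> real" where
  "fmod \<phi> g1 g2 = Max (norm ` zroots \<phi> g1 g2)"

definition Delta :: "real \<Rightarrow> real \<Rightarrow> real \<Rightarrow> real" where
  "Delta \<phi> g1 g2 = (qb \<phi> g1 g2)^2 - 4 * qc g1 g2"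

end

theory Submission
  imports Defs
begin

text \<open>
  Write \<open>q\<^sub>y(z) = z\<^sup>2 - b(y) z + c(y)\<close> for the quadratic with parameter \<open>\<gamma>\<^sub>2 = y\<close>. Its
  coefficients are affine in \<open>y\<close>, so \<open>q\<^sub>x(z) = q\<^sub>y(z) + (x - y)(\<gamma>\<^sub>1 - 1 - (\<gamma>\<^sub>1\<phi> - 1) z)\<close>.
  For \<open>y \<le> \<gamma>\<^sub>1\<close> every real root \<open>z\<close> of \<open>q\<^sub>y\<close> makes the last factor positive, so for
  \<open>x \<le> y\<close> the dominant real root of \<open>q\<^sub>y\<close> satisfies \<open>q\<^sub>x(z) \<le> 0\<close> and hence lies between the
  real roots of \<open>q\<^sub>x\<close>: the spectral radius can only grow as \<open>y\<close> decreases, as long as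
  \<open>q\<^sub>y\<close> has real roots. Vieta's formulas for the discriminant \<open>\<Delta>\<close>, evaluated at \<open>0\<close> and
  \<open>1\<close>, place its roots in \<open>[1, \<infinity>)\<close> with midpoint at least \<open>\<gamma>\<^sub>1\<close>; so the sign of
  \<open>\<Delta>(\<gamma>\<^sub>1)\<close>, which changes exactly at \<open>\<gamma>\<^sub>1 = 2/(1 + \<surd>(1 - \<phi>))\<close>, decides whether
  \<open>\<xi>\<^sub>1 \<le> \<gamma>\<^sub>1\<close>. Beyond \<open>\<xi>\<^sub>1\<close> the roots are complex conjugates of modulus \<open>\<surd>c\<close>.
\<close>

lemma monic_quadratic_roots:
  fixes r1 r2 :: "'a::idom"
  assumes "r1 + r2 = b" "r1 * r2 = c"
  shows "{z. z^2 - b*z + c = 0} = {r1, r2}"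
proof -
  have "z^2 - b*z + c = (z - r1) * (z - r2)" for z
    unfolding assms[symmetric] by (simp add: algebra_simps power2_eq_square)
  then show ?thesis by auto
qed

lemma Max_norm_quadratic_roots_real:
  fixes b c :: real
  assumes "4*c \<le> b^2"
  shows "Max (norm ` {z::complex. z^2 - of_real b * z + of_real c = 0})
           = (\<bar>b\<bar> + sqrt (b^2 - 4*c)) / 2"
proof -
  define s where "s = sqrt (b^2 - 4*c)"
  have s0: "0 \<le> s" and s2: "s^2 = b^2 - 4*c"
    using assms by (simp_all add: s_def)
  have "(b + s)/2 + (b - s)/2 = b" "((b + s)/2) * ((b - s)/2) = c"
    using s2 by (simp_all add: field_simps power2_eq_square)
  then have "{z::complex. z^2 - of_real b * z + of_real c = 0}
               = {of_real ((b + s)/2), of_real ((b - s)/2)}"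
    by (intro monic_quadratic_roots) (metis of_real_add of_real_mult)+
  then have "Max (norm ` {z::complex. z^2 - of_real b * z + of_real c = 0})
               = max \<bar>(b + s)/2\<bar> \<bar>(b - s)/2\<bar>"
    by (simp del: of_real_add of_real_diff of_real_divide)
  also have "\<dots> = (\<bar>b\<bar> + s) / 2"
    using s0 by (auto simp: max_def abs_if field_simps)
  finally show ?thesis by (simp add: s_def)
qed

lemma Max_norm_quadratic_roots_nonreal:
  fixes b c :: real
  assumes "b^2 \<le> 4*c"
  shows "Max (norm ` {z::complex. z^2 - of_real b * z + of_real c = 0}) = sqrt c"
proof -
  define s where "s = sqrt (4*c - b^2)"
  have s2: "s^2 = 4*c - b^2"
    using assms by (simp add: s_def)
  have "{z::complex. z^2 - of_real b * z + of_real c = 0}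
          = {Complex (b/2) (s/2), Complex (b/2) (-s/2)}"
    by (rule monic_quadratic_roots)
       (use s2 in \<open>simp_all add: complex_eq_iff algebra_simps power2_eq_square\<close>)
  then have "Max (norm ` {z::complex. z^2 - of_real b * z + of_real c = 0})
               = sqrt ((b/2)^2 + (s/2)^2)"
    by (simp add: norm_complex_def)
  also have "(b/2)^2 + (s/2)^2 = c"
    using s2 by (simp add: power_divide field_simps)
  finally show ?thesis .
qed

lemma fmod_eq_of_Delta_nonneg:
  "0 \<le> Delta p a x \<Longrightarrow> fmod p a x = (\<bar>qb p a x\<bar> + sqrt (Delta p a x)) / 2"
  unfolding fmod_def zroots_def Delta_def by (rule Max_norm_quadratic_roots_real) simp

lemma fmod_eq_of_Delta_nonpos:
  "Delta p a x \<le> 0 \<Longrightarrow> fmod p a x = sqrt (qc a x)"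
  unfolding fmod_def zroots_def Delta_def by (rule Max_norm_quadratic_roots_nonreal) simp

lemma real_quadratic_root_of_max_abs:
  fixes b c :: real
  assumes "4*c \<le> b^2"
  obtains t where "t^2 - b*t + c = 0" "\<bar>t\<bar> = (\<bar>b\<bar> + sqrt (b^2 - 4*c)) / 2"
proof
  define s where "s = sqrt (b^2 - 4*c)"
  have s0: "0 \<le> s" and s2: "s^2 = b^2 - 4*c"
    using assms by (simp_all add: s_def)
  define t where "t = (if 0 \<le> b then (b + s)/2 else (b - s)/2)"
  have "(2*t - b)^2 = s^2"
    by (simp add: t_def power2_eq_square field_simps)
  then show "t^2 - b*t + c = 0"
    using s2 by (simp add: power2_eq_square algebra_simps)
  show "\<bar>t\<bar> = (\<bar>b\<bar> + sqrt (b^2 - 4*c)) / 2"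
    using s0 by (simp add: t_def s_def[symmetric])
qed

lemma abs_le_of_quadratic_nonpos:
  fixes b c t :: real
  assumes "t^2 - b*t + c \<le> 0"
  shows "4*c \<le> b^2" "\<bar>t\<bar> \<le> (\<bar>b\<bar> + sqrt (b^2 - 4*c)) / 2"
proof -
  have sq: "(2*t - b)^2 \<le> b^2 - 4*c"
    using assms by (simp add: power2_eq_square algebra_simps)
  moreover have "0 \<le> (2*t - b)^2"
    by simp
  ultimately show "4*c \<le> b^2"
    by linarith
  have "\<bar>2*t - b\<bar> \<le> sqrt (b^2 - 4*c)"
    using real_sqrt_le_mono[OF sq] by simp
  moreover have "\<bar>2*t\<bar> \<le> \<bar>2*t - b\<bar> + \<bar>b\<bar>"
    using abs_triangle_ineq[of "2*t - b" b] by simp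
  ultimately show "\<bar>t\<bar> \<le> (\<bar>b\<bar> + sqrt (b^2 - 4*c)) / 2"
    by simp
qed

lemma sq_mul_less_three_mul_sub_two:
  fixes a p :: real
  assumes "0 < p" "p < 1" "1 \<le> a" "a \<le> 2"
  shows "a^2 * p < 3*a - 2"
proof -
  have "a^2 * p < a^2"
    using assms by simp
  moreover have "0 \<le> (a - 1) * (2 - a)"
    using assms by simp
  ultimately show ?thesis
    by (simp add: power2_eq_square algebra_simps)
qed

lemma quadratic_pencil:
  "z^2 - qb p a x * z + qc a x
     = z^2 - qb p a y * z + qc a y + (x - y) * (a - 1 - (a*p - 1) * z)"
  by (simp add: qb_def qc_def algebra_simps)

lemma pencil_factor_pos_at_root:
  fixes a p y t :: real
  assumes p: "0 < p" "p < 1" and a: "1 < a" "a \<le> 2" and "y \<le> a"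
    and root: "t^2 - qb p a y * t + qc a y = 0"
  shows "0 < a - 1 - (a*p - 1) * t"
proof (rule ccontr)
  define m where "m = a*p - 1"
  define b where "b = qb p a y"
  assume "\<not> 0 < a - 1 - (a*p - 1) * t"
  then have ge: "a - 1 \<le> m*t"
    by (simp add: m_def)
  have "2*(a - 1) - m*b = a*p*(3*a - 2 - a^2*p) + m^2*(a - y)"
    by (simp add: m_def b_def qb_def power2_eq_square algebra_simps)
  moreover have "0 < a*p*(3*a - 2 - a^2*p)"
    using sq_mul_less_three_mul_sub_two[of p a] p a by simp
  moreover have "0 \<le> m^2*(a - y)"
    using \<open>y \<le> a\<close> by simp
  ultimately have "m*b < 2*(a - 1)"
    by linarith
  \<comment> \<open>\<open>(t - w)(t + w - b) = q(t) - q(w)\<close> at the common point \<open>w = (a - 1)/m\<close> of the pencil,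
    where \<open>m\<^sup>2 q(w) = (a - 1)(m + 1)(a - 1 - m)\<close>; scaled by \<open>m\<^sup>2\<close> to avoid dividing by \<open>m\<close>\<close>
  with ge have "0 \<le> (m*t - (a - 1)) * (m*t + (a - 1) - m*b)"
    by simp
  also have "(m*t - (a - 1)) * (m*t + (a - 1) - m*b)
               = m^2 * (t^2 - b*t + qc a y) - (a - 1)*(m + 1)*(a - 1 - m)"
    by (simp add: m_def b_def qb_def qc_def power2_eq_square algebra_simps)
  also have "\<dots> < 0"
    using root p a by (simp add: m_def b_def)
  finally show False
    by simp
qed

lemma fmod_antimono:
  fixes a p x y :: real
  assumes p: "0 < p" "p < 1" and a: "1 < a" "a \<le> 2"
    and "x \<le> y" "y \<le> a" and "0 \<le> Delta p a y"
  shows "fmod p a y \<le> fmod p a x"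
proof -
  obtain t where root: "t^2 - qb p a y * t + qc a y = 0"
    and t: "\<bar>t\<bar> = fmod p a y"
    using real_quadratic_root_of_max_abs[of "qc a y" "qb p a y"] \<open>0 \<le> Delta p a y\<close>
    by (auto simp: fmod_eq_of_Delta_nonneg Delta_def)
  have "t^2 - qb p a x * t + qc a x = (x - y) * (a - 1 - (a*p - 1) * t)"
    using quadratic_pencil[of t p a x y] root by simp
  also have "\<dots> \<le> 0"
    using pencil_factor_pos_at_root[OF p a \<open>y \<le> a\<close> root] \<open>x \<le> y\<close>
    by (simp add: mult_nonpos_nonneg)
  finally have "t^2 - qb p a x * t + qc a x \<le> 0" .
  from abs_le_of_quadratic_nonpos[OF this] t show ?thesis
    by (simp add: fmod_eq_of_Delta_nonneg Delta_def)
qed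

lemma Delta_root_bounds:
  fixes a p \<xi>1 \<xi>2 :: real
  assumes p: "0 < p" "p < 1" and a: "1 \<le> a" "a \<le> 2" "a*p \<noteq> 1"
    and roots: "\<forall>x. Delta p a x = (1 - a*p)^2 * (x - \<xi>1) * (x - \<xi>2)"
    and ord: "\<bar>\<xi>1\<bar> \<le> \<bar>\<xi>2\<bar>"
  shows "1 \<le> \<xi>1" "\<xi>1 \<le> \<xi>2" "2*a \<le> \<xi>1 + \<xi>2"
proof -
  define M where "M = (1 - a*p)^2"
  have M: "0 < M"
    using a by (simp add: M_def)
  have prod: "M * (\<xi>1*\<xi>2) = a^2"
    using roots[rule_format, of 0]
    by (simp add: M_def Delta_def qb_def qc_def power2_eq_square algebra_simps)
  have at_one: "M * ((1 - \<xi>1)*(1 - \<xi>2)) = (1 - a + a*p)^2"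
    using roots[rule_format, of 1]
    by (simp add: M_def Delta_def qb_def qc_def power2_eq_square algebra_simps)
  have "M * (\<xi>1 + \<xi>2) - M * (2*a) = 2*a*p*(3*a - 2 - a^2*p)"
    using prod at_one by (simp add: M_def power2_eq_square algebra_simps)
  also have "\<dots> > 0"
    using sq_mul_less_three_mul_sub_two[OF p a(1,2)] p a by simp
  finally show sum: "2*a \<le> \<xi>1 + \<xi>2"
    using M by simp
  have "0 < M * (\<xi>1*\<xi>2)"
    using prod a by simp
  then have "0 < \<xi>1*\<xi>2"
    using M by (simp add: zero_less_mult_iff)
  with sum a have "0 < \<xi>1" "0 < \<xi>2"
    by (auto simp: zero_less_mult_iff)
  with ord show "\<xi>1 \<le> \<xi>2"
    by simp
  have "0 \<le> M * ((1 - \<xi>1)*(1 - \<xi>2))"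
    using at_one by simp
  then have "0 \<le> (1 - \<xi>1)*(1 - \<xi>2)"
    using M by (simp add: zero_le_mult_iff)
  with sum a show "1 \<le> \<xi>1"
    by (auto simp: zero_le_mult_iff)
qed

lemma Delta_diag:
  fixes a p :: real
  assumes "p \<le> 1"
  shows "Delta p a a
           = a^2 * p * ((a*(1 + sqrt (1 - p)) - 2) * (a*(1 - sqrt (1 - p)) - 2))"
proof -
  have "(sqrt (1 - p))^2 = 1 - p"
    using assms by simp
  then show ?thesis
    by (simp add: Delta_def qb_def qc_def power2_eq_square algebra_simps)
qed

lemma Delta_diag_nonneg:
  fixes a p :: real
  assumes "0 < p" "p < 1" "a \<le> 2 / (1 + sqrt (1 - p))"
  shows "0 \<le> Delta p a a"
proof -
  define s where "s = sqrt (1 - p)"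
  have s: "0 < s" "s < 1"
    using assms(1,2) by (simp_all add: s_def)
  have "a \<le> 2 / (1 + s)"
    using assms(3) by (simp add: s_def)
  then have "a*(1 + s) \<le> 2"
    using s by (simp add: le_divide_eq)
  moreover have "a*(1 - s) < 2"
  proof (cases "0 < a")
    case True
    then have "0 < a*s"
      using s by simp
    then show ?thesis
      using \<open>a*(1 + s) \<le> 2\<close> by (simp add: algebra_simps)
  next
    case False
    then have "a*(1 - s) \<le> 0"
      using s by (simp add: mult_nonpos_nonneg)
    then show ?thesis
      by simp
  qed
  ultimately show ?thesis
    using Delta_diag[of p a] assms(1,2) by (simp add: s_def[symmetric] mult_nonpos_nonpos)
qed

lemma Delta_diag_nonpos:
  fixes a p :: real
  assumes "0 < p" "p < 1" "2 / (1 + sqrt (1 - p)) \<le> a" "a < 2"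
  shows "Delta p a a \<le> 0"
proof -
  define s where "s = sqrt (1 - p)"
  have s: "0 < s" "s < 1"
    using assms(1,2) by (simp_all add: s_def)
  have "2 / (1 + s) \<le> a"
    using assms(3) by (simp add: s_def)
  then have "2 \<le> a*(1 + s)"
    using s by (simp add: divide_le_eq)
  moreover have "a*(1 - s) < 2"
  proof -
    have "0 < 2 / (1 + s)"
      using s by simp
    then have "0 \<le> a"
      using \<open>2 / (1 + s) \<le> a\<close> by linarith
    then have "a*(1 - s) \<le> a"
      using s by (simp add: mult_left_le)
    then show ?thesis
      using assms(4) by simp
  qed
  ultimately show ?thesis
    using Delta_diag[of p a] assms(1,2) by (simp add: s_def[symmetric] mult_nonneg_nonpos)
qed

lemma sign_of_factored_quadratic:
  fixes D :: "real \<Rightarrow> real" and M a \<xi>1 \<xi>2 :: real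
  assumes M: "0 < M" and D: "\<And>x. D x = M * (x - \<xi>1) * (x - \<xi>2)"
    and le: "\<xi>1 \<le> \<xi>2" and sum: "2*a \<le> \<xi>1 + \<xi>2"
  shows "x \<le> \<xi>1 \<Longrightarrow> 0 \<le> D x"
    and "\<xi>1 \<le> x \<Longrightarrow> x \<le> a \<Longrightarrow> D x \<le> 0"
    and "0 \<le> D a \<Longrightarrow> a \<le> \<xi>1"
    and "D a \<le> 0 \<Longrightarrow> \<xi>1 \<le> a"
proof -
  show "0 \<le> D x" if "x \<le> \<xi>1"
  proof -
    have "M * (x - \<xi>1) \<le> 0"
      using M that by (simp add: mult_nonneg_nonpos)
    then show ?thesis
      using that le by (simp add: D mult_nonpos_nonpos)
  qed
  show "D x \<le> 0" if "\<xi>1 \<le> x" "x \<le> a"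
  proof -
    have "0 \<le> M * (x - \<xi>1)"
      using M that by simp
    then show ?thesis
      using that sum by (simp add: D mult_nonneg_nonpos)
  qed
  show "a \<le> \<xi>1" if "0 \<le> D a"
  proof (rule ccontr)
    assume "\<not> a \<le> \<xi>1"
    then have "0 < M * (a - \<xi>1)" "a < \<xi>2"
      using M sum by simp_all
    then have "D a < 0"
      by (simp add: D mult_pos_neg)
    with that show False
      by simp
  qed
  show "\<xi>1 \<le> a" if "D a \<le> 0"
  proof (rule ccontr)
    assume "\<not> \<xi>1 \<le> a"
    then have "M * (a - \<xi>1) < 0" "a < \<xi>2"
      using M le by (simp_all add: mult_pos_neg)
    then have "0 < D a"
      by (simp add: D mult_neg_neg)
    with that show False
      by simp
  qed
qed

theorem mainTheorem18:
  fixes \<phi> g1 \<xi>1 \<xi>2 :: real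
  assumes "0 < \<phi>" "\<phi> < 1" "1 \<le> g1" "g1 < 2" "g1 * \<phi> \<noteq> 1"
    and roots: "\<forall>x. Delta \<phi> g1 x = (1 - g1 * \<phi>)^2 * (x - \<xi>1) * (x - \<xi>2)"
    and ord: "\<bar>\<xi>1\<bar> \<le> \<bar>\<xi>2\<bar>"
  shows "1 \<le> \<xi>1
    \<and> (g1 \<le> 2 / (1 + sqrt (1 - \<phi>)) \<longrightarrow>
         (\<forall>x y. 1 \<le> x \<and> x \<le> y \<and> y \<le> g1 \<longrightarrow> fmod \<phi> g1 y \<le> fmod \<phi> g1 x))
    \<and> (2 / (1 + sqrt (1 - \<phi>)) \<le> g1 \<longrightarrow>
         \<xi>1 \<le> g1
         \<and> (\<forall>x y. 1 \<le> x \<and> x \<le> y \<and> y \<le> \<xi>1 \<longrightarrow> fmod \<phi> g1 y \<le> fmod \<phi> g1 x)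
         \<and> (\<forall>x. \<xi>1 \<le> x \<and> x \<le> g1 \<longrightarrow> fmod \<phi> g1 x = sqrt ((g1 - 1) * (x - 1))))"
proof -
  have g1: "g1 \<le> 2"
    using assms(4) by simp
  note bounds = Delta_root_bounds[OF assms(1-3) g1 assms(5) roots ord]
  have "0 < (1 - g1 * \<phi>)^2"
    using assms(5) by simp
  note sign = sign_of_factored_quadratic[OF this roots[rule_format] bounds(2,3)]
  have antimono: "fmod \<phi> g1 y \<le> fmod \<phi> g1 x"
    if "1 < g1" "x \<le> y" "y \<le> g1" "y \<le> \<xi>1" for x y
    using fmod_antimono[OF assms(1,2) that(1) g1 that(2,3) sign(1)[OF that(4)]] .
  have part_a: "fmod \<phi> g1 y \<le> fmod \<phi> g1 x"
    if "g1 \<le> 2 / (1 + sqrt (1 - \<phi>))" "1 \<le> x" "x \<le> y" "y \<le> g1" for x y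
  proof (cases "g1 = 1")
    case True
    with that have "x = y"
      by simp
    then show ?thesis
      by simp
  next
    case False
    have "g1 \<le> \<xi>1"
      using sign(3)[OF Delta_diag_nonneg[OF assms(1,2) that(1)]] .
    with False assms(3) that show ?thesis
      by (simp add: antimono)
  qed
  have part_b: "\<xi>1 \<le> g1"
      "1 \<le> x \<Longrightarrow> x \<le> y \<Longrightarrow> y \<le> \<xi>1 \<Longrightarrow> fmod \<phi> g1 y \<le> fmod \<phi> g1 x"
      "\<xi>1 \<le> z \<Longrightarrow> z \<le> g1 \<Longrightarrow> fmod \<phi> g1 z = sqrt ((g1 - 1) * (z - 1))"
    if "2 / (1 + sqrt (1 - \<phi>)) \<le> g1" for x y z
  proof -
    show "\<xi>1 \<le> g1"
      using sign(4)[OF Delta_diag_nonpos[OF assms(1,2) that assms(4)]] .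
    have "0 \<le> sqrt (1 - \<phi>)" "sqrt (1 - \<phi>) < 1"
      using assms(1,2) by simp_all
    then have "1 < 2 / (1 + sqrt (1 - \<phi>))"
      by (subst less_divide_eq_1_pos) linarith+
    then show "fmod \<phi> g1 y \<le> fmod \<phi> g1 x" if "1 \<le> x" "x \<le> y" "y \<le> \<xi>1"
      using that \<open>\<xi>1 \<le> g1\<close> \<open>2 / (1 + sqrt (1 - \<phi>)) \<le> g1\<close> by (simp add: antimono)
    show "fmod \<phi> g1 z = sqrt ((g1 - 1) * (z - 1))" if "\<xi>1 \<le> z" "z \<le> g1"
      using fmod_eq_of_Delta_nonpos[OF sign(2)[OF that]] by (simp add: qc_def)
  qed
  show ?thesis
    using bounds(1) part_a part_b by blast
qed

end
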